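(* Let $n$ be a non-negative integer and $r,s\in\mathbb{C}\setminus\mathbb{Z}^{-}$ with $s\neq0$ and $r-s\notin\mathbb{Z}^{-}$. Then \[ \begin{aligned} &\sum_{k=0}^{n}\binom{n}{k}\frac{H_{n-k+r-s}}{(k+2)(k+s)\binom{n+r}{k+s}}-H_{n+r}\sum_{k=0}^{n}\binom{n}{k}\frac{1}{(k+2)(k+s)\binom{n+r}{k+s}}\\ &\quad=H_{r-s}\sum_{k=0}^{n}\binom{n}{k}\frac{(-1)^k}{(k+1)(k+2)(k+s)\binom{k+r}{k+s}}-\sum_{k=0}^{n}\binom{n}{k}\frac{(-1)^kH_{k+r}}{(k+1)(k+2)(k+s)\binom{k+r}{k+s}}. \end{aligned} \]
   Context: $\mathbb{Z}^{-}$ denotes the set of negative integers. For complex $z$ not a negative integer, $H_z=\psi(z+1)+\gamma$ ($\psi$ the digamma function, $\gamma$ Euler's constant). Binomial coefficients with complex entries: $\binom{x}{y}=\frac{\Gamma(x+1)}{\Gamma(y+1)\Gamma(x-y+1)}$. *)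

theory Defs
  imports "HOL-Analysis.Analysis"
begin

definition negInts :: "complex set" where
  "negInts = {of_int m | m. m < 0}"

definition Hc :: "complex \<Rightarrow> complex" where
  "Hc z = Digamma (z + 1) + of_real euler_mascheroni"

definition cbinom :: "complex \<Rightarrow> complex \<Rightarrow> complex" where
  "cbinom x y = Gamma (x + 1) / (Gamma (y + 1) * Gamma (x - y + 1))"

end

theory Submission
  imports Defs
begin

text \<open>
  Both sides are the derivatives at \<open>x = r\<close> of the two sides of
    \<open>\<Sum>k. C(n,k) / ((k+2)(k+s) binom(n+x, k+s)) = \<Sum>k. C(n,k) (-1)^k / ((k+1)(k+2)(k+s) binom(k+x, k+s))\<close>,
  an identity valid for all \<open>x\<close> near \<open>r\<close>, because
  \<open>d/dx binom(c+x, w)^-1 = binom(c+x, w)^-1 (H(c+x-w) - H(c+x))\<close>.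
  Writing the reciprocal binomials with Gamma functions, the identity becomes
    \<open>\<Sum>j. C(n,j) (s)_j (x-s+1)_(n-j) / (j+2) = \<Sum>k. C(n,k) (-1)^k (s)_k (x+1+k)_(n-k) / ((k+1)(k+2))\<close>
  for Pochhammer symbols, which follows by expanding \<open>1/(j+2) = \<Sum>k. C(j,k) (-1)^k / ((k+1)(k+2))\<close>,
  exchanging the order of summation and applying Vandermonde's convolution.
\<close>

lemma in_negInts_iff: "z \<in> negInts \<longleftrightarrow> z + 1 \<in> \<int>\<^sub>\<le>\<^sub>0"
proof
  assume "z \<in> negInts"
  then obtain m where "z = of_int m" "m < 0" by (auto simp: negInts_def)
  then show "z + 1 \<in> \<int>\<^sub>\<le>\<^sub>0" using nonpos_Ints_of_int[of "m + 1"] by simp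
next
  assume "z + 1 \<in> \<int>\<^sub>\<le>\<^sub>0"
  then obtain j where "z + 1 = of_int j" "j \<le> 0" by (elim nonpos_Ints_cases)
  then have "z = of_int (j - 1)" by (simp add: algebra_simps)
  moreover have "j - 1 < 0" using \<open>j \<le> 0\<close> by simp
  ultimately show "z \<in> negInts" unfolding negInts_def by blast
qed

lemma nonpos_Ints_eq_insert_negInts: "\<int>\<^sub>\<le>\<^sub>0 = insert 0 negInts"
  by (auto simp: negInts_def nonpos_Ints_def less_le)

lemma add_of_nat_notin_nonpos_Ints:
  fixes z :: "'a :: ring_char_0"
  assumes "z \<notin> \<int>\<^sub>\<le>\<^sub>0"
  shows "z + of_nat m \<notin> \<int>\<^sub>\<le>\<^sub>0"
  using nonpos_Ints_diff_Nats[of "z + of_nat m" "of_nat m"] assms by auto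

lemma of_nat_add_one_neq_zero [simp]: "(of_nat m + 1 :: 'a :: semiring_char_0) \<noteq> 0"
  using of_nat_eq_0_iff[of "m + 1"] by (simp add: add.commute)

lemma of_nat_add_numeral_neq_zero [simp]: "(of_nat m + numeral c :: 'a :: semiring_char_0) \<noteq> 0"
  using of_nat_eq_0_iff[of "m + numeral c"] by simp

lemma sum_choose_alternating_div_Suc_Suc:
  "(\<Sum>k=0..j. of_nat (j choose k) * (-1) ^ k / ((of_nat k + 1) * (of_nat k + 2)))
     = (1 / (of_nat j + 2) :: 'a :: field_char_0)"
proof -
  have choose_Suc_Suc: "(of_nat k + 1) * (of_nat k + 2) * of_nat (j + 2 choose k + 2)
      = (of_nat j + 1) * (of_nat j + 2) * (of_nat (j choose k) :: 'a)" for k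
  proof -
    have "(k + 2) * (j + 2 choose k + 2) = (j + 2) * (j + 1 choose k + 1)"
      and "(k + 1) * (j + 1 choose k + 1) = (j + 1) * (j choose k)"
      using Suc_times_binomial[of "k + 1" "j + 1"] Suc_times_binomial[of k j]
      unfolding Suc_eq_plus1 add.assoc one_add_one .
    then have "(k + 1) * (k + 2) * (j + 2 choose k + 2) = (j + 1) * (j + 2) * (j choose k)"
      by (metis mult.assoc mult.commute)
    then have "of_nat ((k + 1) * (k + 2) * (j + 2 choose k + 2))
        = (of_nat ((j + 1) * (j + 2) * (j choose k)) :: 'a)"
      by (simp only:)
    then show ?thesis
      by (simp only: of_nat_mult of_nat_add of_nat_1 of_nat_numeral)
  qed
  have shift: "(\<Sum>i\<le>j + 2. g i) = g 0 + g 1 + (\<Sum>k=0..j. g (k + 2))" for g :: "nat \<Rightarrow> 'a"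
    by (simp add: sum.atMost_Suc_shift numeral_2_eq_2 atLeast0AtMost del: sum.atMost_Suc)
  have "(0::'a) = (\<Sum>i\<le>j + 2. (-1) ^ i * of_nat (j + 2 choose i))"
    by (rule choose_alternating_sum[symmetric]) simp
  also have "\<dots> = 1 - (of_nat j + 2) + (\<Sum>k=0..j. (-1) ^ k * of_nat (j + 2 choose k + 2))"
    unfolding shift by simp
  finally have alternating: "(\<Sum>k=0..j. (-1) ^ k * of_nat (j + 2 choose k + 2)) = (of_nat j + 1 :: 'a)"
    by (simp add: algebra_simps)
  have "(\<Sum>k=0..j. of_nat (j choose k) * (-1) ^ k / ((of_nat k + 1) * (of_nat k + 2)))
      = (\<Sum>k=0..j. (-1) ^ k * of_nat (j + 2 choose k + 2)) / ((of_nat j + 1) * (of_nat j + 2) :: 'a)"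
    unfolding sum_divide_distrib
  proof (rule sum.cong[OF refl])
    fix k
    have "(of_nat k + 1) * (of_nat k + 2) \<noteq> (0::'a)" "(of_nat j + 1) * (of_nat j + 2) \<noteq> (0::'a)"
      by simp_all
    then show "of_nat (j choose k) * (-1) ^ k / ((of_nat k + 1) * (of_nat k + 2))
        = (-1) ^ k * of_nat (j + 2 choose k + 2) / ((of_nat j + 1) * (of_nat j + 2) :: 'a)"
      using choose_Suc_Suc[of k] by (simp add: field_simps del: binomial_Suc_Suc)
  qed
  also have "\<dots> = 1 / (of_nat j + 2)"
    unfolding alternating by simp
  finally show ?thesis .
qed

lemma sum_choose_mult_pochhammer:
  fixes a b :: "'a :: comm_ring_1"
  assumes "k \<le> n"
  shows "(\<Sum>j=0..n. of_nat (j choose k) * (of_nat (n choose j) * pochhammer a j * pochhammer b (n - j)))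
       = of_nat (n choose k) * pochhammer a k * pochhammer (a + of_nat k + b) (n - k)"
proof -
  let ?f = "\<lambda>j. of_nat (j choose k) * (of_nat (n choose j) * pochhammer a j * pochhammer b (n - j))"
  have "(\<Sum>j=0..n. ?f j) = (\<Sum>j=k..n. ?f j)"
    by (rule sum.mono_neutral_right) (auto simp: binomial_eq_0)
  also have "\<dots> = (\<Sum>i\<le>n - k. ?f (i + k))"
    using sum.shift_bounds_cl_nat_ivl[of ?f 0 k "n - k"] assms by (simp add: atLeast0AtMost)
  also have "\<dots> = (\<Sum>i\<le>n - k. of_nat (n choose k) * pochhammer a k *
        (of_nat (n - k choose i) * pochhammer (a + of_nat k) i * pochhammer b (n - k - i)))"
  proof (rule sum.cong[OF refl])
    fix i assume "i \<in> {..n - k}"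
    then have "i + k \<le> n" using assms by simp
    then have "(n choose (i + k)) * (i + k choose k) = (n choose k) * (n - k choose i)"
      using choose_mult[of k "i + k" n] by simp
    then have choose: "of_nat (n choose (i + k)) * of_nat (i + k choose k)
        = (of_nat (n choose k) * of_nat (n - k choose i) :: 'a)"
      by (metis of_nat_mult)
    have poch: "pochhammer a (i + k) = pochhammer a k * pochhammer (a + of_nat k) i"
      by (subst add.commute) (rule pochhammer_product')
    have "?f (i + k) = of_nat (n choose (i + k)) * of_nat (i + k choose k)
        * pochhammer a (i + k) * pochhammer b (n - k - i)"
      by (simp add: mult_ac add.commute)
    also have "\<dots> = of_nat (n choose k) * pochhammer a k *
        (of_nat (n - k choose i) * pochhammer (a + of_nat k) i * pochhammer b (n - k - i))"
      unfolding choose poch by (simp add: mult_ac)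
    finally show "?f (i + k) = of_nat (n choose k) * pochhammer a k *
        (of_nat (n - k choose i) * pochhammer (a + of_nat k) i * pochhammer b (n - k - i))" .
  qed
  also have "\<dots> = of_nat (n choose k) * pochhammer a k * pochhammer (a + of_nat k + b) (n - k)"
    by (simp add: pochhammer_binomial_sum sum_distrib_left)
  finally show ?thesis .
qed

lemma sum_pochhammer_div_add_two:
  fixes a b :: "'a :: field_char_0"
  shows "(\<Sum>j=0..n. of_nat (n choose j) * pochhammer a j * pochhammer b (n - j) / (of_nat j + 2))
       = (\<Sum>k=0..n. of_nat (n choose k) * (-1) ^ k * pochhammer a k * pochhammer (a + of_nat k + b) (n - k)
            / ((of_nat k + 1) * (of_nat k + 2)))"
proof -
  let ?c = "\<lambda>j. of_nat (n choose j) * pochhammer a j * pochhammer b (n - j)"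
  let ?w = "\<lambda>k. (-1) ^ k / ((of_nat k + 1) * (of_nat k + 2)) :: 'a"
  have "(\<Sum>j=0..n. ?c j / (of_nat j + 2)) = (\<Sum>j=0..n. \<Sum>k=0..n. ?c j * (of_nat (j choose k) * ?w k))"
  proof (rule sum.cong[OF refl])
    fix j assume "j \<in> {0..n}"
    then have "(\<Sum>k=0..n. of_nat (j choose k) * ?w k) = (\<Sum>k=0..j. of_nat (j choose k) * ?w k)"
      by (intro sum.mono_neutral_right) auto
    also have "\<dots> = 1 / (of_nat j + 2)"
      using sum_choose_alternating_div_Suc_Suc[of j] by (simp only: times_divide_eq_right)
    finally have "(\<Sum>k=0..n. of_nat (j choose k) * ?w k) = 1 / (of_nat j + 2)" .
    then show "?c j / (of_nat j + 2) = (\<Sum>k=0..n. ?c j * (of_nat (j choose k) * ?w k))"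
      unfolding sum_distrib_left[symmetric] by simp
  qed
  also have "\<dots> = (\<Sum>k=0..n. ?w k * (\<Sum>j=0..n. of_nat (j choose k) * ?c j))"
    by (subst sum.swap) (simp add: sum_distrib_left mult_ac)
  also have "\<dots> = (\<Sum>k=0..n. ?w k * (of_nat (n choose k) * pochhammer a k * pochhammer (a + of_nat k + b) (n - k)))"
    by (intro sum.cong refl) (simp add: sum_choose_mult_pochhammer)
  also have "\<dots> = (\<Sum>k=0..n. of_nat (n choose k) * (-1) ^ k * pochhammer a k * pochhammer (a + of_nat k + b) (n - k)
            / ((of_nat k + 1) * (of_nat k + 2)))"
    by (intro sum.cong refl) (simp add: field_simps)
  finally show ?thesis .
qed

lemma Gamma_add_of_nat:
  fixes z :: "'a :: Gamma"
  assumes "z \<notin> \<int>\<^sub>\<le>\<^sub>0"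
  shows "Gamma (z + of_nat m) = Gamma z * pochhammer z m"
  using pochhammer_Gamma[OF assms, of m] assms by (simp add: Gamma_eq_zero_iff)

lemma pochhammer_neq_0_if_notin_nonpos_Ints:
  fixes z :: "'a :: Gamma"
  assumes "z \<notin> \<int>\<^sub>\<le>\<^sub>0"
  shows "pochhammer z m \<noteq> 0"
  using Gamma_add_of_nat[OF assms, of m] add_of_nat_notin_nonpos_Ints[OF assms, of m]
  by (auto simp: Gamma_eq_zero_iff)

text \<open>No side conditions: if some Gamma value vanishes, both sides are \<open>0\<close> since \<open>x / 0 = 0\<close>.\<close>

lemma inverse_cbinom: "inverse (cbinom z w) = Gamma (w + 1) * Gamma (z - w + 1) / Gamma (z + 1)"
  by (simp add: cbinom_def)

lemma inverse_cbinom_div_pochhammer: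
  fixes s x :: complex
  assumes s: "s \<notin> \<int>\<^sub>\<le>\<^sub>0" and x: "x + 1 \<notin> \<int>\<^sub>\<le>\<^sub>0" and xs: "x - s + 1 \<notin> \<int>\<^sub>\<le>\<^sub>0"
    and "k \<le> m"
  shows "inverse (cbinom (of_nat m + x) (of_nat k + s)) / (of_nat k + s)
       = Gamma s * Gamma (x - s + 1) / Gamma (x + 1)
         * (pochhammer s k * pochhammer (x - s + 1) (m - k) / pochhammer (x + 1) m)"
proof -
  have "s + of_nat k \<noteq> 0"
    using add_of_nat_notin_nonpos_Ints[OF s, of k] by auto
  then have Gamma_k: "Gamma (of_nat k + s + 1) / (of_nat k + s) = Gamma s * pochhammer s k"
    using Gamma_add_of_nat[OF s, of "Suc k"] by (simp add: pochhammer_rec' add_ac)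
  have Gamma_m_k: "Gamma (of_nat m + x - (of_nat k + s) + 1) = Gamma (x - s + 1) * pochhammer (x - s + 1) (m - k)"
    using Gamma_add_of_nat[OF xs, of "m - k"] \<open>k \<le> m\<close> by (simp add: of_nat_diff algebra_simps)
  have Gamma_m: "Gamma (of_nat m + x + 1) = Gamma (x + 1) * pochhammer (x + 1) m"
    using Gamma_add_of_nat[OF x, of m] by (simp add: add_ac)
  have "inverse (cbinom (of_nat m + x) (of_nat k + s)) / (of_nat k + s)
      = Gamma (of_nat k + s + 1) / (of_nat k + s)
        * (Gamma (of_nat m + x - (of_nat k + s) + 1) / Gamma (of_nat m + x + 1))"
    unfolding inverse_cbinom by (simp add: divide_inverse mult_ac)
  then show ?thesis
    unfolding Gamma_k Gamma_m_k Gamma_m by (simp add: divide_inverse mult_ac)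
qed

lemma sum_inverse_cbinom_eq_alternating_sum:
  fixes n :: nat and s x :: complex
  assumes s: "s \<notin> \<int>\<^sub>\<le>\<^sub>0" and x: "x + 1 \<notin> \<int>\<^sub>\<le>\<^sub>0" and xs: "x - s + 1 \<notin> \<int>\<^sub>\<le>\<^sub>0"
  shows "(\<Sum>k=0..n. of_nat (n choose k) / (of_nat k + 2)
            * (inverse (cbinom (of_nat n + x) (of_nat k + s)) / (of_nat k + s)))
       = (\<Sum>k=0..n. of_nat (n choose k) * (-1) ^ k / ((of_nat k + 1) * (of_nat k + 2))
            * (inverse (cbinom (of_nat k + x) (of_nat k + s)) / (of_nat k + s)))"
proof -
  define K where "K = Gamma s * Gamma (x - s + 1) / Gamma (x + 1) / pochhammer (x + 1) n"
  have left: "of_nat (n choose k) / (of_nat k + 2)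
        * (inverse (cbinom (of_nat n + x) (of_nat k + s)) / (of_nat k + s))
      = K * (of_nat (n choose k) * pochhammer s k * pochhammer (x - s + 1) (n - k) / (of_nat k + 2))"
    if "k \<in> {0..n}" for k
    using inverse_cbinom_div_pochhammer[OF s x xs, of k n] that by (simp add: K_def field_simps)
  have right: "of_nat (n choose k) * (-1) ^ k / ((of_nat k + 1) * (of_nat k + 2))
        * (inverse (cbinom (of_nat k + x) (of_nat k + s)) / (of_nat k + s))
      = K * (of_nat (n choose k) * (-1) ^ k * pochhammer s k * pochhammer (s + of_nat k + (x - s + 1)) (n - k)
          / ((of_nat k + 1) * (of_nat k + 2)))"
    if "k \<in> {0..n}" for k
  proof -
    have "pochhammer (x + 1) n = pochhammer (x + 1) k * pochhammer (x + 1 + of_nat k) (n - k)"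
      using that by (simp add: pochhammer_product)
    moreover have "pochhammer (x + 1) n \<noteq> 0"
      using x by (rule pochhammer_neq_0_if_notin_nonpos_Ints)
    ultimately show ?thesis
      using inverse_cbinom_div_pochhammer[OF s x xs, of k k] by (simp add: K_def field_simps add_ac)
  qed
  have "(\<Sum>k=0..n. of_nat (n choose k) / (of_nat k + 2)
            * (inverse (cbinom (of_nat n + x) (of_nat k + s)) / (of_nat k + s)))
      = K * (\<Sum>k=0..n. of_nat (n choose k) * pochhammer s k * pochhammer (x - s + 1) (n - k) / (of_nat k + 2))"
    by (simp only: sum.cong[OF refl left] sum_distrib_left)
  also have "\<dots> = K * (\<Sum>k=0..n. of_nat (n choose k) * (-1) ^ k * pochhammer s k
      * pochhammer (s + of_nat k + (x - s + 1)) (n - k) / ((of_nat k + 1) * (of_nat k + 2)))"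
    by (simp only: sum_pochhammer_div_add_two)
  also have "\<dots> = (\<Sum>k=0..n. of_nat (n choose k) * (-1) ^ k / ((of_nat k + 1) * (of_nat k + 2))
            * (inverse (cbinom (of_nat k + x) (of_nat k + s)) / (of_nat k + s)))"
    by (simp only: sum.cong[OF refl right] sum_distrib_left)
  finally show ?thesis .
qed

lemma has_field_derivative_inverse_cbinom:
  assumes "c + x + 1 \<notin> \<int>\<^sub>\<le>\<^sub>0" and "c + x - w + 1 \<notin> \<int>\<^sub>\<le>\<^sub>0"
  shows "((\<lambda>y. inverse (cbinom (c + y) w)) has_field_derivative
           inverse (cbinom (c + x) w) * (Hc (c + x - w) - Hc (c + x))) (at x)"
proof -
  have "Gamma (c + x + 1) \<noteq> 0"
    using assms(1) by (simp add: Gamma_eq_zero_iff)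
  then show ?thesis
    unfolding inverse_cbinom Hc_def using assms
    by (auto intro!: derivative_eq_intros simp: field_simps power2_eq_square)
qed

lemma has_field_derivative_sum_inverse_cbinom:
  assumes "\<And>k. k \<in> A \<Longrightarrow> c k + x + 1 \<notin> \<int>\<^sub>\<le>\<^sub>0 \<and> c k + x - w k + 1 \<notin> \<int>\<^sub>\<le>\<^sub>0"
  shows "((\<lambda>y. \<Sum>k\<in>A. a k * inverse (cbinom (c k + y) (w k))) has_field_derivative
           (\<Sum>k\<in>A. a k * (inverse (cbinom (c k + x) (w k)) * (Hc (c k + x - w k) - Hc (c k + x))))) (at x)"
  using assms by (intro DERIV_sum DERIV_cmult has_field_derivative_inverse_cbinom) auto

theorem theorem22:
  fixes n :: nat and r s :: complex
  assumes "r \<notin> negInts" and "s \<notin> negInts" and "s \<noteq> 0" and "r - s \<notin> negInts"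
  shows "(\<Sum>k=0..n. of_nat (n choose k) * Hc (of_nat n - of_nat k + r - s)
            / ((of_nat k + 2) * (of_nat k + s) * cbinom (of_nat n + r) (of_nat k + s)))
         - Hc (of_nat n + r) * (\<Sum>k=0..n. of_nat (n choose k)
            / ((of_nat k + 2) * (of_nat k + s) * cbinom (of_nat n + r) (of_nat k + s)))
       = Hc (r - s) * (\<Sum>k=0..n. of_nat (n choose k) * (-1) ^ k
            / ((of_nat k + 1) * (of_nat k + 2) * (of_nat k + s) * cbinom (of_nat k + r) (of_nat k + s)))
         - (\<Sum>k=0..n. of_nat (n choose k) * (-1) ^ k * Hc (of_nat k + r)
            / ((of_nat k + 1) * (of_nat k + 2) * (of_nat k + s) * cbinom (of_nat k + r) (of_nat k + s)))"
    (is "?L = ?R")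
proof -
  have s: "s \<notin> \<int>\<^sub>\<le>\<^sub>0"
    using assms(2,3) by (simp add: nonpos_Ints_eq_insert_negInts)
  define S where "S = {x. x + 1 \<notin> \<int>\<^sub>\<le>\<^sub>0 \<and> x - s + 1 \<notin> \<int>\<^sub>\<le>\<^sub>0}"
  have "open S"
    unfolding S_def
    by (intro open_Collect_conj open_Collect_neg closed_vimage[unfolded vimage_def])
      (auto intro!: continuous_intros)
  have r: "r + 1 \<notin> \<int>\<^sub>\<le>\<^sub>0" and rs: "r - s + 1 \<notin> \<int>\<^sub>\<le>\<^sub>0"
    using assms(1,4) by (simp_all add: in_negInts_iff)
  then have "r \<in> S" by (simp add: S_def)
  define F where "F x = (\<Sum>k=0..n. of_nat (n choose k) / ((of_nat k + 2) * (of_nat k + s))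
            * inverse (cbinom (of_nat n + x) (of_nat k + s)))" for x
  define G where "G x = (\<Sum>k=0..n. of_nat (n choose k) * (-1) ^ k / ((of_nat k + 1) * (of_nat k + 2) * (of_nat k + s))
            * inverse (cbinom (of_nat k + x) (of_nat k + s)))" for x
  have F_eq_G: "F x = G x" if "x \<in> S" for x
    using sum_inverse_cbinom_eq_alternating_sum[OF s, of x n] that by (simp add: S_def F_def G_def field_simps)
  have n_r: "of_nat m + r + 1 \<notin> \<int>\<^sub>\<le>\<^sub>0" for m
    using add_of_nat_notin_nonpos_Ints[OF r, of m] by (simp add: add_ac)
  have n_r_s: "of_nat n + r - (of_nat k + s) + 1 \<notin> \<int>\<^sub>\<le>\<^sub>0" if "k \<le> n" for k
    using add_of_nat_notin_nonpos_Ints[OF rs, of "n - k"] that by (simp add: of_nat_diff algebra_simps)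
  have F_deriv: "(F has_field_derivative ?L) (at r)"
    unfolding F_def
    by (rule DERIV_cong[OF has_field_derivative_sum_inverse_cbinom])
      (use n_r n_r_s in \<open>auto simp: sum_distrib_left sum_subtractf[symmetric] divide_inverse
        inverse_mult_distrib mult_ac right_diff_distrib diff_diff_eq diff_add_eq\<close>)
  have G_deriv: "(G has_field_derivative ?R) (at r)"
    unfolding G_def
    by (rule DERIV_cong[OF has_field_derivative_sum_inverse_cbinom])
      (use n_r rs in \<open>auto simp: sum_distrib_left sum_subtractf[symmetric] divide_inverse
        inverse_mult_distrib mult_ac right_diff_distrib\<close>)
  have "(G has_field_derivative ?L) (at r)"
    using F_deriv \<open>open S\<close> \<open>r \<in> S\<close> F_eq_G by (rule has_field_derivative_transform_within_open)
  then show ?thesis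
    using G_deriv by (rule DERIV_unique)
qed

end
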